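(* There is a bijection $\beta\mapsto g(\beta)$ from the set of left collinearity points of $B$ onto the set of oriented lines in $\mathbb{R}^3$ such that, for all $p,P\in\mathbb{R}^3$, the pseudo spherical condition for $(p,P)$ at $\beta$ holds if and only if $p\in g(\beta)$. Likewise, there is a bijection $\beta\mapsto g(\beta)$ from the set of right collinearity points onto the set of oriented lines such that, for all $p,P\in\mathbb{R}^3$, the pseudo spherical condition for $(p,P)$ at $\beta$ holds if and only if $P\in g(\beta)$.
   Context: Write a direct isometry as $v\mapsto Mv+y$ ($M\in SO(3)$) and put $x=-M^ty$, $r=\langle y,y\rangle$. It corresponds to $(h:M:x:y:r)=(1:m_{11}:\dots:m_{33}:x_1:x_2:x_3:y_1:y_2:y_3:r)\in\mathbb{P}^{16}_{\mathbb{C}}$. $X$ is the complex Zariski closure of all such points. Throughout, $\langle u,u'\rangle=u^tu'$ is the complex bilinear form on $\mathbb{C}^3$. The boundary is $B=X\cap\{h=0\}$. A point $\beta=(0:M:x:y:r)\in B$ with $M=0$ is a left collinearity point if $x\neq0$ and $y=0$, and a right collinearity point if $x=0$ and $y\ne0$. The pseudo spherical condition for $(p,P)$ at $\beta$ is the complex equation $r-2\langle p,x\rangle-2\langle y,P\rangle-2\langle Mp,P\rangle=0$. *)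

theory Defs
  imports "HOL-Analysis.Analysis"
begin

text \<open>Homogeneous coordinates (h : M : x : y : r) of P^16 over the complex numbers.\<close>
type_synonym pt = "complex \<times> ((complex^3)^3) \<times> (complex^3) \<times> (complex^3) \<times> complex"

definition ph :: "pt \<Rightarrow> complex" where "ph v = fst v"
definition pM :: "pt \<Rightarrow> complex^3^3" where "pM v = fst (snd v)"
definition px :: "pt \<Rightarrow> complex^3" where "px v = fst (snd (snd v))"
definition py :: "pt \<Rightarrow> complex^3" where "py v = fst (snd (snd (snd v)))"
definition pr :: "pt \<Rightarrow> complex" where "pr v = snd (snd (snd (snd v)))"

definition pscale :: "complex \<Rightarrow> pt \<Rightarrow> pt" where
  "pscale c v = (c * ph v, (\<chi> i j. c * pM v $ i $ j), c *s px v, c *s py v, c * pr v)"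

definition pzero :: "pt \<Rightarrow> bool" where
  "pzero v \<longleftrightarrow> ph v = 0 \<and> pM v = 0 \<and> px v = 0 \<and> py v = 0 \<and> pr v = 0"

definition pclass :: "pt \<Rightarrow> pt set" where
  "pclass v = {pscale c v | c. c \<noteq> 0}"

text \<open>Complex bilinear (not Hermitian) form on C^3.\<close>
definition cdot :: "complex^3 \<Rightarrow> complex^3 \<Rightarrow> complex" where
  "cdot u w = (\<Sum>i\<in>UNIV. u $ i * w $ i)"

definition cvec :: "real^3 \<Rightarrow> complex^3" where
  "cvec u = (\<chi> i. complex_of_real (u $ i))"

definition cmat :: "real^3^3 \<Rightarrow> complex^3^3" where
  "cmat A = (\<chi> i j. complex_of_real (A $ i $ j))"

definition SO3 :: "(real^3^3) set" where
  "SO3 = {M. orthogonal_matrix M \<and> det M = 1}"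

text \<open>The point (1 : M : x : y : r) of the direct isometry v \<mapsto> M v + y,
  with x = - M^t y and r = <y,y>.\<close>
definition iso_pt :: "real^3^3 \<Rightarrow> real^3 \<Rightarrow> pt" where
  "iso_pt M y = (1, cmat M, cvec (- (transpose M *v y)), cvec y, complex_of_real (y \<bullet> y))"

inductive polyfun :: "(pt \<Rightarrow> complex) \<Rightarrow> bool" where
  pf_const: "polyfun (\<lambda>v. c)"
| pf_h: "polyfun ph"
| pf_M: "polyfun (\<lambda>v. pM v $ i $ j)"
| pf_x: "polyfun (\<lambda>v. px v $ i)"
| pf_y: "polyfun (\<lambda>v. py v $ i)"
| pf_r: "polyfun pr"
| pf_add: "polyfun f \<Longrightarrow> polyfun g \<Longrightarrow> polyfun (\<lambda>v. f v + g v)"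
| pf_mult: "polyfun f \<Longrightarrow> polyfun g \<Longrightarrow> polyfun (\<lambda>v. f v * g v)"

definition homogeneous_of :: "nat \<Rightarrow> (pt \<Rightarrow> complex) \<Rightarrow> bool" where
  "homogeneous_of d f \<longleftrightarrow> (\<forall>c v. f (pscale c v) = c ^ d * f v)"

text \<open>Affine cone (minus 0) over X: the Zariski closure in P^16 of all points of direct isometries,
  i.e. the common nonzero zeros of all homogeneous polynomials vanishing on these points.\<close>
definition Xcone :: "pt set" where
  "Xcone = {v. \<not> pzero v \<and>
     (\<forall>f d. polyfun f \<and> homogeneous_of d f \<and> (\<forall>M\<in>SO3. \<forall>y. f (iso_pt M y) = 0) \<longrightarrow> f v = 0)}"

definition Bnd :: "pt set set" where
  "Bnd = {pclass v | v. v \<in> Xcone \<and> ph v = 0}"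

definition left_coll :: "pt set set" where
  "left_coll = {pclass v | v. v \<in> Xcone \<and> ph v = 0 \<and> pM v = 0 \<and> px v \<noteq> 0 \<and> py v = 0}"

definition right_coll :: "pt set set" where
  "right_coll = {pclass v | v. v \<in> Xcone \<and> ph v = 0 \<and> pM v = 0 \<and> px v = 0 \<and> py v \<noteq> 0}"

text \<open>Pseudo spherical condition for (p,P) at a representative v, and at a projective point
  (the condition is homogeneous linear, hence independent of the representative).\<close>
definition psc_vec :: "pt \<Rightarrow> real^3 \<Rightarrow> real^3 \<Rightarrow> bool" where
  "psc_vec v p P \<longleftrightarrow>
     pr v - 2 * cdot (cvec p) (px v) - 2 * cdot (py v) (cvec P) - 2 * cdot (pM v *v cvec p) (cvec P) = 0"

definition psc :: "pt set \<Rightarrow> real^3 \<Rightarrow> real^3 \<Rightarrow> bool" where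
  "psc \<beta> p P \<longleftrightarrow> (\<forall>v\<in>\<beta>. psc_vec v p P)"

definition oriented_lines :: "((real^3) set \<times> (real^3)) set" where
  "oriented_lines = {(L, d). norm d = 1 \<and> (\<exists>q. L = {q + t *\<^sub>R d | t. True})}"

end

theory Submission
  imports Defs "HOL-Complex_Analysis.Conformal_Mappings"
begin

text \<open>
  The closure \<open>X\<close> satisfies \<open>\<langle>x,x\<rangle> = h r\<close>, so at a left collinearity point \<open>x\<close> is isotropic.
  Conversely every \<open>(0 : 0 : x : 0 : r)\<close> with \<open>x \<noteq> 0\<close> isotropic lies on \<open>X\<close>: by the identity
  theorem a polynomial vanishing on the isometries also vanishes on complexified rotations about
  the \<open>z\<close>-axis combined with complex translations, and a holomorphic curve of such points reaches
  \<open>(0 : 0 : (2, 2i, 0) : 0 : r)\<close>; rotating this point gives all the others.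
  Writing \<open>x = \<rho> (e\<^sub>1 + i e\<^sub>2)\<close> with \<open>e\<^sub>1, e\<^sub>2\<close> orthonormal, the pair \<open>(x, r)\<close> up to a common factor is
  the oriented line \<open>{p. 2\<langle>p,x\<rangle> = r}\<close> with direction \<open>e\<^sub>1 \<times> e\<^sub>2\<close>, and \<open>2\<langle>p,x\<rangle> = r\<close> is exactly the
  pseudo spherical condition. Inverting isometries gives the symmetry \<open>(M, x, y) \<mapsto> (M\<^sup>t, y, x)\<close> of \<open>X\<close>,
  which exchanges left and right collinearity points and the roles of \<open>p\<close> and \<open>P\<close>.
\<close>

subsection \<open>Projective points\<close>

lemma pt_eq_iff: "v = w \<longleftrightarrow> ph v = ph w \<and> pM v = pM w \<and> px v = px w \<and> py v = py w \<and> pr v = pr w"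
  by (cases v; cases w) (auto simp: ph_def pM_def px_def py_def pr_def)

lemma pscale_coords [simp]:
  "ph (pscale c v) = c * ph v" "pM (pscale c v) = (\<chi> i j. c * pM v $ i $ j)"
  "px (pscale c v) = c *s px v" "py (pscale c v) = c *s py v" "pr (pscale c v) = c * pr v"
  by (simp_all add: pscale_def ph_def pM_def px_def py_def pr_def)

lemma pscale_pscale: "pscale c (pscale c' v) = pscale (c * c') v"
  by (simp add: pt_eq_iff vec_eq_iff algebra_simps)

lemma pscale_1 [simp]: "pscale 1 v = v"
  by (simp add: pt_eq_iff vec_eq_iff)

lemma pclass_self: "v \<in> pclass v"
  unfolding pclass_def by (rule CollectI, rule exI[of _ 1]) simp

lemma pclass_pscale:
  assumes "c \<noteq> 0"
  shows "pclass (pscale c v) = pclass v"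
proof
  show "pclass (pscale c v) \<subseteq> pclass v"
    using assms by (auto simp: pclass_def pscale_pscale)
  show "pclass v \<subseteq> pclass (pscale c v)"
  proof
    fix w assume "w \<in> pclass v"
    then obtain e where e: "e \<noteq> 0" "w = pscale e v" by (auto simp: pclass_def)
    then have "w = pscale (e / c) (pscale c v)" using assms by (simp add: pscale_pscale)
    then show "w \<in> pclass (pscale c v)" using e assms unfolding pclass_def by auto
  qed
qed

lemma pclass_eq_imp_pscale:
  assumes "pclass v = pclass w"
  obtains c where "c \<noteq> 0" "v = pscale c w"
  using pclass_self[of v] assms by (auto simp: pclass_def)

lemma pzero_pscale: "c \<noteq> 0 \<Longrightarrow> pzero (pscale c v) \<longleftrightarrow> pzero v"
  by (auto simp: pzero_def vec_eq_iff)

lemma homogeneous_of_pscale: "homogeneous_of d f \<Longrightarrow> f (pscale c v) = c ^ d * f v"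
  unfolding homogeneous_of_def by blast

lemma Xcone_pscale:
  assumes "v \<in> Xcone" "c \<noteq> 0"
  shows "pscale c v \<in> Xcone"
proof -
  have "f (pscale c v) = 0"
    if "polyfun f" "homogeneous_of d f" "\<forall>M\<in>SO3. \<forall>y. f (iso_pt M y) = 0" for f d
  proof -
    have "f v = 0" using that assms(1) unfolding Xcone_def by blast
    then show ?thesis by (simp add: homogeneous_of_pscale[OF that(2)])
  qed
  then show ?thesis using assms by (auto simp: Xcone_def pzero_pscale)
qed

lemma cdot_scale_left: "cdot (c *s u) w = c * cdot u w"
  and cdot_scale_right: "cdot u (c *s w) = c * cdot u w"
  by (simp_all add: cdot_def sum_distrib_left algebra_simps)

lemma cdot_commute: "cdot u w = cdot w u"
  by (simp add: cdot_def mult.commute)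

lemma cdot_0_left [simp]: "cdot 0 w = 0"
  by (simp add: cdot_def)

lemma cdot_transpose: "cdot (transpose A *v u) w = cdot u (A *v w)"
  by (simp add: cdot_def matrix_vector_mult_def transpose_def sum_3 algebra_simps)

lemma scaled_matrix_vector_mult: "(\<chi> i j. c * (A::complex^3^3) $ i $ j) *v u = c *s (A *v u)"
  by (simp add: matrix_vector_mult_def vec_eq_iff sum_distrib_left algebra_simps)

lemma psc_vec_pscale:
  assumes "c \<noteq> 0"
  shows "psc_vec (pscale c v) p P \<longleftrightarrow> psc_vec v p P"
proof -
  have "pr (pscale c v) - 2 * cdot (cvec p) (px (pscale c v)) - 2 * cdot (py (pscale c v)) (cvec P)
          - 2 * cdot (pM (pscale c v) *v cvec p) (cvec P)
        = c * (pr v - 2 * cdot (cvec p) (px v) - 2 * cdot (py v) (cvec P) - 2 * cdot (pM v *v cvec p) (cvec P))"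
    by (simp add: cdot_scale_left cdot_scale_right scaled_matrix_vector_mult algebra_simps)
  then show ?thesis using assms by (simp add: psc_vec_def)
qed

lemma psc_pclass: "psc (pclass v) p P \<longleftrightarrow> psc_vec v p P"
proof
  show "psc (pclass v) p P \<Longrightarrow> psc_vec v p P" using pclass_self unfolding psc_def by blast
  show "psc (pclass v) p P" if "psc_vec v p P"
    unfolding psc_def pclass_def using that psc_vec_pscale by blast
qed

lemma polyfun_sum:
  "finite S \<Longrightarrow> (\<And>k. k \<in> S \<Longrightarrow> polyfun (g k)) \<Longrightarrow> polyfun (\<lambda>v. \<Sum>k\<in>S. g k v)"
  by (induction S rule: finite_induct) (simp_all add: polyfun.pf_const polyfun.pf_add)

lemma polyfun_diff:
  assumes "polyfun f" "polyfun g"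
  shows "polyfun (\<lambda>v. f v - g v)"
proof -
  have "polyfun (\<lambda>v. f v + (-1) * g v)" using assms by (intro polyfun.intros)
  then show ?thesis by simp
qed

definition polymap :: "(pt \<Rightarrow> pt) \<Rightarrow> bool" where
  "polymap T \<longleftrightarrow> polyfun (\<lambda>v. ph (T v)) \<and> (\<forall>i j. polyfun (\<lambda>v. pM (T v) $ i $ j)) \<and>
     (\<forall>i. polyfun (\<lambda>v. px (T v) $ i)) \<and> (\<forall>i. polyfun (\<lambda>v. py (T v) $ i)) \<and> polyfun (\<lambda>v. pr (T v))"

lemma polyfun_compose_polymap: "polyfun f \<Longrightarrow> polymap T \<Longrightarrow> polyfun (\<lambda>v. f (T v))"
  by (induction rule: polyfun.induct) (auto simp: polymap_def intro: polyfun.intros)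

lemma Xcone_polymap_image:
  assumes "polymap T" and T_pscale: "\<And>c w. T (pscale c w) = pscale c (T w)"
    and T_iso: "\<And>M y. M \<in> SO3 \<Longrightarrow> \<exists>M'\<in>SO3. \<exists>y'. T (iso_pt M y) = iso_pt M' y'"
    and "\<not> pzero (T v)" "v \<in> Xcone"
  shows "T v \<in> Xcone"
  unfolding Xcone_def
proof (intro CollectI conjI allI impI)
  show "\<not> pzero (T v)" by fact
  fix f d assume f: "polyfun f \<and> homogeneous_of d f \<and> (\<forall>M\<in>SO3. \<forall>y. f (iso_pt M y) = 0)"
  have "polyfun (\<lambda>w. f (T w))"
    using f \<open>polymap T\<close> polyfun_compose_polymap by blast
  moreover have "homogeneous_of d (\<lambda>w. f (T w))"
    using f homogeneous_of_pscale unfolding homogeneous_of_def T_pscale by blast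
  moreover have "\<forall>M\<in>SO3. \<forall>y. f (T (iso_pt M y)) = 0"
    using f T_iso by metis
  ultimately show "f (T v) = 0"
    using \<open>v \<in> Xcone\<close> unfolding Xcone_def by blast
qed

lemma iso_pt_coords:
  "ph (iso_pt M y) = 1" "pM (iso_pt M y) = cmat M" "px (iso_pt M y) = cvec (- (transpose M *v y))"
  "py (iso_pt M y) = cvec y" "pr (iso_pt M y) = complex_of_real (y \<bullet> y)"
  by (simp_all add: iso_pt_def ph_def pM_def px_def py_def pr_def)

lemma cvec_minus: "cvec (- u) = - cvec u"
  by (simp add: cvec_def vec_eq_iff)

lemma cmat_matrix_vector_mult: "cmat A *v cvec u = cvec (A *v u)"
  by (simp add: cmat_def cvec_def vec_eq_iff matrix_vector_mult_def)

lemma cmat_matrix_matrix_mult: "cmat A ** cmat B = cmat (A ** B)"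
  by (simp add: cmat_def vec_eq_iff matrix_matrix_mult_def)

lemma cmat_transpose: "transpose (cmat A) = cmat (transpose A)"
  by (simp add: cmat_def vec_eq_iff transpose_def)

lemma matrix_vector_mult_uminus: "(A::'a::comm_ring_1^'n^'m) *v (- u) = - (A *v u)"
  by (simp add: vec_eq_iff matrix_vector_mult_def sum_negf)

lemma orthogonal_matrix_inner_self:
  fixes A :: "real^'n^'n"
  assumes "orthogonal_matrix A"
  shows "(A *v u) \<bullet> (A *v u) = u \<bullet> u"
proof -
  have "(A *v u) \<bullet> (A *v u) = u \<bullet> (transpose A *v (A *v u))"
    by (metis dot_lmul_matrix vector_transpose_matrix)
  also have "\<dots> = u \<bullet> u"
    using assms by (simp add: matrix_vector_mul_assoc orthogonal_matrix_def)
  finally show ?thesis .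
qed

subsection \<open>Symmetries of \<open>X\<close>\<close>

text \<open>Precomposing the isometry with the rotation \<open>Q\<^sup>t\<close>.\<close>
definition rot_pt :: "real^3^3 \<Rightarrow> pt \<Rightarrow> pt" where
  "rot_pt Q v = (ph v, pM v ** transpose (cmat Q), cmat Q *v px v, py v, pr v)"

lemma rot_pt_coords:
  "ph (rot_pt Q v) = ph v" "pM (rot_pt Q v) = pM v ** transpose (cmat Q)"
  "px (rot_pt Q v) = cmat Q *v px v" "py (rot_pt Q v) = py v" "pr (rot_pt Q v) = pr v"
  by (simp_all add: rot_pt_def ph_def pM_def px_def py_def pr_def)

lemma polymap_rot_pt: "polymap (rot_pt Q)"
  unfolding polymap_def rot_pt_coords matrix_matrix_mult_def matrix_vector_mult_def vec_lambda_beta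
  by (intro conjI allI polyfun_sum[OF finite] polyfun.intros)

lemma rot_pt_pscale: "rot_pt Q (pscale c v) = pscale c (rot_pt Q v)"
  by (simp add: pt_eq_iff rot_pt_coords vec_eq_iff matrix_matrix_mult_def matrix_vector_mult_def
      sum_distrib_left algebra_simps)

lemma rot_pt_iso_pt: "rot_pt Q (iso_pt M y) = iso_pt (M ** transpose Q) y"
proof -
  have "transpose (M ** transpose Q) *v y = Q *v (transpose M *v y)"
    by (simp only: matrix_transpose_mul transpose_transpose matrix_vector_mul_assoc)
  then show ?thesis
    unfolding pt_eq_iff rot_pt_coords iso_pt_coords
    by (simp only: cmat_transpose cmat_matrix_matrix_mult cmat_matrix_vector_mult cvec_minus
        matrix_vector_mult_uminus)
qed

lemma Xcone_rot_pt:
  assumes "Q \<in> SO3" "v \<in> Xcone" "\<not> pzero (rot_pt Q v)"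
  shows "rot_pt Q v \<in> Xcone"
proof (rule Xcone_polymap_image[OF polymap_rot_pt rot_pt_pscale _ assms(3,2)])
  show "\<exists>M'\<in>SO3. \<exists>y'. rot_pt Q (iso_pt M y) = iso_pt M' y'" if "M \<in> SO3" for M y
    using that assms(1)
    by (intro bexI[of _ "M ** transpose Q"] exI[of _ y])
      (auto simp: rot_pt_iso_pt SO3_def orthogonal_matrix_mul det_mul)
qed

text \<open>The point of the inverse isometry \<open>v \<mapsto> M\<^sup>t v + x\<close>.\<close>
definition swap_pt :: "pt \<Rightarrow> pt" where
  "swap_pt v = (ph v, transpose (pM v), py v, px v, pr v)"

lemma swap_pt_coords:
  "ph (swap_pt v) = ph v" "pM (swap_pt v) = transpose (pM v)" "px (swap_pt v) = py v"
  "py (swap_pt v) = px v" "pr (swap_pt v) = pr v"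
  by (simp_all add: swap_pt_def ph_def pM_def px_def py_def pr_def)

lemma swap_pt_swap_pt [simp]: "swap_pt (swap_pt v) = v"
  by (simp add: pt_eq_iff swap_pt_coords)

lemma swap_pt_pscale: "swap_pt (pscale c v) = pscale c (swap_pt v)"
  by (simp add: pt_eq_iff swap_pt_coords vec_eq_iff transpose_def)

lemma polymap_swap_pt: "polymap swap_pt"
  unfolding polymap_def swap_pt_coords transpose_def vec_lambda_beta
  by (intro conjI allI polyfun.intros)

lemma swap_pt_iso_pt:
  assumes "orthogonal_matrix M"
  shows "swap_pt (iso_pt M y) = iso_pt (transpose M) (- (transpose M *v y))"
proof -
  have "- (transpose (transpose M) *v - (transpose M *v y)) = y"
    using assms
    by (simp only: transpose_transpose matrix_vector_mult_uminus minus_minus matrix_vector_mul_assoc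
        orthogonal_matrix_def matrix_vector_mul_lid)
  moreover have "orthogonal_matrix (transpose M)" using assms by simp
  then have "(- (transpose M *v y)) \<bullet> (- (transpose M *v y)) = y \<bullet> y"
    by (simp only: inner_minus_left inner_minus_right minus_minus orthogonal_matrix_inner_self)
  ultimately show ?thesis
    unfolding pt_eq_iff swap_pt_coords iso_pt_coords by (simp add: cmat_transpose cvec_minus)
qed

lemma transpose_eq_0_iff: "transpose A = 0 \<longleftrightarrow> A = 0"
  by (auto simp: transpose_def vec_eq_iff)

lemma Xcone_swap_pt:
  assumes "v \<in> Xcone"
  shows "swap_pt v \<in> Xcone"
proof (rule Xcone_polymap_image[OF polymap_swap_pt swap_pt_pscale _ _ assms])
  show "\<exists>M'\<in>SO3. \<exists>y'. swap_pt (iso_pt M y) = iso_pt M' y'" if "M \<in> SO3" for M y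
    using that
    by (intro bexI[of _ "transpose M"] exI[of _ "- (transpose M *v y)"])
      (auto simp: swap_pt_iso_pt SO3_def)
  show "\<not> pzero (swap_pt v)"
    using assms unfolding Xcone_def pzero_def swap_pt_coords transpose_eq_0_iff by blast
qed

lemma psc_vec_swap_pt: "psc_vec (swap_pt v) p P \<longleftrightarrow> psc_vec v P p"
  unfolding psc_vec_def swap_pt_coords cdot_transpose
  by (simp add: cdot_commute[of "cvec p"] cdot_commute[of "px v"] algebra_simps)

text \<open>On isometries \<open>\<langle>M\<^sup>t y, M\<^sup>t y\<rangle> = \<langle>y,y\<rangle>\<close>.\<close>
lemma Xcone_cdot_px:
  assumes "v \<in> Xcone"
  shows "cdot (px v) (px v) = ph v * pr v"
proof -
  define f where "f w = px w $ 1 * px w $ 1 + px w $ 2 * px w $ 2 + px w $ 3 * px w $ 3 - ph w * pr w" for w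
  have "polyfun f" unfolding f_def
    by (intro polyfun_diff polyfun.intros)
  moreover have "homogeneous_of 2 f"
    by (simp add: homogeneous_of_def f_def power2_eq_square algebra_simps)
  moreover have "f (iso_pt M y) = 0" if "M \<in> SO3" for M y
  proof -
    have "orthogonal_matrix (transpose M)" using that by (simp add: SO3_def)
    then have "(transpose M *v y) \<bullet> (transpose M *v y) = y \<bullet> y"
      by (rule orthogonal_matrix_inner_self)
    then have "complex_of_real ((transpose M *v y) \<bullet> (transpose M *v y)) = complex_of_real (y \<bullet> y)"
      by simp
    then show ?thesis unfolding f_def iso_pt_coords
      by (simp add: cvec_def inner_vec_def sum_3 power2_eq_square)
  qed
  ultimately have "f v = 0" using assms unfolding Xcone_def by blast
  then show ?thesis by (simp add: f_def cdot_def sum_3)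
qed

subsection \<open>Boundary points via the identity theorem\<close>

definition entire_pt :: "(complex \<Rightarrow> pt) \<Rightarrow> bool" where
  "entire_pt \<Phi> \<longleftrightarrow> (\<lambda>z. ph (\<Phi> z)) holomorphic_on UNIV \<and>
     (\<forall>i j. (\<lambda>z. pM (\<Phi> z) $ i $ j) holomorphic_on UNIV) \<and>
     (\<forall>i. (\<lambda>z. px (\<Phi> z) $ i) holomorphic_on UNIV) \<and> (\<forall>i. (\<lambda>z. py (\<Phi> z) $ i) holomorphic_on UNIV) \<and>
     (\<lambda>z. pr (\<Phi> z)) holomorphic_on UNIV"

lemma polyfun_entire_pt: "polyfun f \<Longrightarrow> entire_pt \<Phi> \<Longrightarrow> (\<lambda>z. f (\<Phi> z)) holomorphic_on UNIV"
  by (induction rule: polyfun.induct) (auto simp: entire_pt_def intro: holomorphic_intros)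

lemma entire_zero_if_zero_on_reals:
  assumes "g holomorphic_on UNIV" "\<And>x::real. g (of_real x) = 0"
  shows "g z = 0"
proof (rule analytic_continuation[OF assms(1), where U = "range of_real" and \<xi> = 0])
  show "(0::complex) islimpt range of_real"
  proof (rule islimpt_approachable[THEN iffD2], intro allI impI)
    fix e :: real assume "0 < e"
    then show "\<exists>x'\<in>range (of_real :: real \<Rightarrow> complex). x' \<noteq> 0 \<and> dist x' 0 < e"
      by (intro bexI[of _ "complex_of_real (e/2)"] conjI) (auto simp: dist_norm simp del: of_real_divide)
  qed
qed (use assms in auto)

lemma entire_zero_if_zero_off_two_points:
  assumes "g holomorphic_on UNIV" "\<And>z. z \<noteq> 0 \<Longrightarrow> z \<noteq> 2 \<Longrightarrow> g z = 0"
  shows "g 0 = 0"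
proof (rule analytic_continuation[OF assms(1), where U = "UNIV - {0,2}" and \<xi> = 0])
  have "(0::complex) islimpt ({0,2} \<union> (UNIV - {0,2}))" by simp
  then show "(0::complex) islimpt (UNIV - {0,2})" by (subst (asm) islimpt_Un_finite) auto
qed (use assms in auto)

text \<open>The numerator of the rational parametrization \<open>zrot a\<close> of rotations about the \<open>z\<close>-axis;
  being polynomial in \<open>a\<close>, it also makes sense for complex \<open>a\<close>.\<close>
definition zrot_num :: "'a::comm_ring_1 \<Rightarrow> 'a^3^3" where
  "zrot_num a = vector [vector [1 - a^2, -2*a, 0], vector [2*a, 1 - a^2, 0], vector [0, 0, 1 + a^2]]"

lemma zrot_num_nth:
  "zrot_num a $ i $ j = (if i = 1 then (if j = 1 then 1 - a^2 else if j = 2 then -2*a else 0)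
     else if i = 2 then (if j = 1 then 2*a else if j = 2 then 1 - a^2 else 0)
     else (if j = 3 then 1 + a^2 else 0))"
  using exhaust_3[of i] exhaust_3[of j] by (auto simp: zrot_num_def)

definition zrot :: "real \<Rightarrow> real^3^3" where
  "zrot a = (1 / (1 + a^2)) *\<^sub>R zrot_num a"

lemma zrot_SO3: "zrot a \<in> SO3"
proof -
  define c where "c = 1 / (1 + a^2)"
  have "(0::real) < 1 + a^2" by (simp add: add_pos_nonneg)
  then have c: "c * (1 + a^2) = 1" unfolding c_def by simp
  have "transpose (zrot a) ** zrot a = mat 1"
    unfolding zrot_def c_def[symmetric]
    by (simp add: vec_eq_iff forall_3 matrix_matrix_mult_def transpose_def mat_def sum_3 zrot_num_nth)
      (use c in algebra)
  moreover have "det (zrot a) = 1"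
    unfolding zrot_def c_def[symmetric]
    by (simp add: det_3 zrot_num_nth) (use c in algebra)
  ultimately show ?thesis by (simp add: SO3_def orthogonal_matrix)
qed

text \<open>\<open>(1 + a\<^sup>2)\<close> times the point of \<open>v \<mapsto> zrot a v + y\<close>, written polynomially in \<open>a\<close> and \<open>y\<close>.\<close>
definition zrot_pt :: "complex \<Rightarrow> complex^3 \<Rightarrow> pt" where
  "zrot_pt a y = (1 + a^2, zrot_num a, - (transpose (zrot_num a) *v y), (1 + a^2) *s y, (1 + a^2) * cdot y y)"

lemma zrot_pt_coords:
  "ph (zrot_pt a y) = 1 + a^2" "pM (zrot_pt a y) = zrot_num a"
  "px (zrot_pt a y) = - (transpose (zrot_num a) *v y)"
  "py (zrot_pt a y) = (1 + a^2) *s y" "pr (zrot_pt a y) = (1 + a^2) * cdot y y"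
  by (simp_all add: zrot_pt_def ph_def pM_def px_def py_def pr_def)

lemma zrot_pt_of_real:
  "zrot_pt (of_real a) (cvec y) = pscale (of_real (1 + a^2)) (iso_pt (zrot a) y)"
proof -
  define c where "c = 1 / (1 + a^2)"
  have "(0::real) < 1 + a^2" by (simp add: add_pos_nonneg)
  then have "c * (1 + a^2) = 1" unfolding c_def by simp
  then have c: "complex_of_real c * (1 + (complex_of_real a)^2) = 1"
    by (metis of_real_1 of_real_add of_real_mult of_real_power)
  show ?thesis
    unfolding pt_eq_iff zrot_def c_def[symmetric]
    apply (simp add: zrot_pt_coords iso_pt_coords cmat_def cvec_def vec_eq_iff forall_3 zrot_num_nth
        matrix_vector_mult_def transpose_def sum_3 cdot_def inner_vec_def)
    apply (intro conjI)
    apply (((rule disjI2)?, insert c, algebra))+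
    done
qed

lemma holomorphic_zrot_num: "A holomorphic_on UNIV \<Longrightarrow> (\<lambda>z. zrot_num (A z) $ i $ j) holomorphic_on UNIV"
  using exhaust_3[of i] exhaust_3[of j] by (auto simp: zrot_num_def intro!: holomorphic_intros)

lemma holomorphic_vector3:
  "Y1 holomorphic_on UNIV \<Longrightarrow> Y2 holomorphic_on UNIV \<Longrightarrow> Y3 holomorphic_on UNIV \<Longrightarrow>
   (\<lambda>z. (vector [Y1 z, Y2 z, Y3 z] :: complex^3) $ i) holomorphic_on UNIV"
  using exhaust_3[of i] by auto

lemma entire_pt_zrot_pt:
  assumes "A holomorphic_on UNIV" "Y1 holomorphic_on UNIV" "Y2 holomorphic_on UNIV" "Y3 holomorphic_on UNIV"
  shows "entire_pt (\<lambda>z. zrot_pt (A z) (vector [Y1 z, Y2 z, Y3 z]))"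
  unfolding entire_pt_def zrot_pt_coords using assms
  by (auto simp: matrix_vector_mult_def transpose_def sum_3 cdot_def
      intro!: holomorphic_zrot_num holomorphic_vector3 holomorphic_intros)

text \<open>The identity theorem, applied in each of the four variables in turn, extends the vanishing
  from real to complex parameters.\<close>
lemma polyfun_zrot_pt_zero:
  assumes "polyfun f" "homogeneous_of d f" "\<forall>M\<in>SO3. \<forall>y. f (iso_pt M y) = 0"
  shows "f (zrot_pt a y) = 0"
proof -
  define F where "F a y1 y2 y3 = f (zrot_pt a (vector [y1, y2, y3]))" for a y1 y2 y3
  have hol: "(\<lambda>z. F (A z) (Y1 z) (Y2 z) (Y3 z)) holomorphic_on UNIV"
    if "A holomorphic_on UNIV" "Y1 holomorphic_on UNIV" "Y2 holomorphic_on UNIV" "Y3 holomorphic_on UNIV"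
    for A Y1 Y2 Y3
    unfolding F_def by (rule polyfun_entire_pt[OF assms(1) entire_pt_zrot_pt[OF that]])
  have cvec3: "cvec (vector [y1, y2, y3]) = vector [of_real y1, of_real y2, of_real y3]" for y1 y2 y3
    by (simp add: cvec_def vec_eq_iff forall_3)
  have real: "F (of_real a) (of_real y1) (of_real y2) (of_real y3) = 0" for a y1 y2 y3
    using assms(3) zrot_SO3[of a] zrot_pt_of_real[of a "vector [y1, y2, y3]"]
    by (simp add: F_def cvec3 homogeneous_of_pscale[OF assms(2)])
  have complex1: "F (of_real a) z1 (of_real y2) (of_real y3) = 0" for a z1 y2 y3
    by (rule entire_zero_if_zero_on_reals[where g = "\<lambda>z. F (of_real a) z (of_real y2) (of_real y3)"],
        rule hol) (auto intro: holomorphic_intros real)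
  have complex2: "F (of_real a) z1 z2 (of_real y3) = 0" for a z1 z2 y3
    by (rule entire_zero_if_zero_on_reals[where g = "\<lambda>z. F (of_real a) z1 z (of_real y3)"],
        rule hol) (auto intro: holomorphic_intros complex1)
  have complex3: "F (of_real a) z1 z2 z3 = 0" for a z1 z2 z3
    by (rule entire_zero_if_zero_on_reals[where g = "\<lambda>z. F (of_real a) z1 z2 z"],
        rule hol) (auto intro: holomorphic_intros complex2)
  have "F a z1 z2 z3 = 0" for a z1 z2 z3
    by (rule entire_zero_if_zero_on_reals[where g = "\<lambda>z. F z z1 z2 z3"],
        rule hol) (auto intro: holomorphic_intros complex3)
  moreover have "y = vector [y$1, y$2, y$3]" by (simp add: vec_eq_iff forall_3)
  ultimately show ?thesis unfolding F_def by metis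
qed

text \<open>For \<open>s \<notin> {0, 2}\<close> this is a multiple of \<open>zrot_pt (-i(1 - s)) y\<close> (note \<open>1 + (-i(1 - s))\<^sup>2 = s(2 - s)\<close>),
  with \<open>y\<close> chosen so that the coordinate \<open>x\<close> stays finite as \<open>s \<rightarrow> 0\<close>.\<close>
definition boundary_curve :: "complex \<Rightarrow> complex \<Rightarrow> pt" where
  "boundary_curve \<rho> s = (s^2 * (2-s)^2, (\<chi> i j. s * (2-s) * zrot_num (-\<i> * (1-s)) $ i $ j),
      vector [2 - s, \<i> * (2 - s), - s * (2 - s) * \<rho>], vector [- s, - \<i> * s, s * (2 - s) * \<rho>], \<rho>^2)"

lemma boundary_curve_coords:
  "ph (boundary_curve \<rho> s) = s^2 * (2-s)^2"
  "pM (boundary_curve \<rho> s) = (\<chi> i j. s * (2-s) * zrot_num (-\<i> * (1-s)) $ i $ j)"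
  "px (boundary_curve \<rho> s) = vector [2 - s, \<i> * (2 - s), - s * (2 - s) * \<rho>]"
  "py (boundary_curve \<rho> s) = vector [- s, - \<i> * s, s * (2 - s) * \<rho>]"
  "pr (boundary_curve \<rho> s) = \<rho>^2"
  by (simp_all add: boundary_curve_def ph_def pM_def px_def py_def pr_def)

lemma boundary_curve_eq_zrot_pt:
  assumes "s \<noteq> 0" "s \<noteq> 2"
  shows "boundary_curve \<rho> s = pscale (s * (2 - s)) (zrot_pt (-\<i> * (1-s))
            (vector [- 1 / (s * (2-s)^2), - \<i> / (s * (2-s)^2), \<rho> / (s * (2 - s))]))"
proof -
  define k where "k = 1 / s"
  define m where "m = 1 / (2 - s)"
  have k: "k * s = 1" and m: "m * (2 - s) = 1" using assms by (simp_all add: k_def m_def)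
  have "vector [- 1 / (s * (2-s)^2), - \<i> / (s * (2-s)^2), \<rho> / (s * (2 - s))] =
      (vector [- k * m * m, - \<i> * k * m * m, \<rho> * k * m] :: complex^3)"
    by (simp add: k_def m_def power2_eq_square mult.assoc)
  moreover have ii: "\<i> * \<i> = -1" by simp
  ultimately show ?thesis
    unfolding pt_eq_iff
    apply (simp add: zrot_pt_coords boundary_curve_coords vec_eq_iff forall_3 zrot_num_nth
        matrix_vector_mult_def transpose_def sum_3 cdot_def)
    apply (intro conjI)
    apply (((rule disjI2)?, insert k m ii, algebra))+
    done
qed

lemma entire_pt_boundary_curve: "entire_pt (boundary_curve \<rho>)"
  unfolding entire_pt_def boundary_curve_coords
  by (auto intro!: holomorphic_intros holomorphic_zrot_num holomorphic_vector3)

lemma standard_boundary_pt_Xcone: "((0, 0, vector [2, 2 * \<i>, 0], 0, r) :: pt) \<in> Xcone"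
  unfolding Xcone_def
proof (intro CollectI conjI allI impI)
  show "\<not> pzero ((0, 0, vector [2, 2 * \<i>, 0], 0, r) :: pt)"
    by (simp add: pzero_def px_def vec_eq_iff forall_3)
  fix f d assume f: "polyfun f \<and> homogeneous_of d f \<and> (\<forall>M\<in>SO3. \<forall>y. f (iso_pt M y) = 0)"
  have "f (boundary_curve (csqrt r) 0) = 0"
  proof (rule entire_zero_if_zero_off_two_points)
    show "(\<lambda>s. f (boundary_curve (csqrt r) s)) holomorphic_on UNIV"
      using f polyfun_entire_pt entire_pt_boundary_curve by blast
    show "f (boundary_curve (csqrt r) s) = 0" if "s \<noteq> 0" "s \<noteq> 2" for s
      using f that polyfun_zrot_pt_zero[of f d]
      by (simp add: boundary_curve_eq_zrot_pt homogeneous_of_pscale[of d f])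
  qed
  moreover have "boundary_curve (csqrt r) 0 = (0, 0, vector [2, 2 * \<i>, 0], 0, r)"
    by (simp add: boundary_curve_def vec_eq_iff forall_3)
  ultimately show "f (0, 0, vector [2, 2 * \<i>, 0], 0, r) = 0" by simp
qed

subsection \<open>Isotropic vectors and orthonormal frames\<close>

definition cpair :: "real^3 \<Rightarrow> real^3 \<Rightarrow> complex^3" where
  "cpair a b = cvec a + \<i> *s cvec b"

definition orthonormal_pair :: "real^3 \<Rightarrow> real^3 \<Rightarrow> bool" where
  "orthonormal_pair a b \<longleftrightarrow> a \<bullet> a = 1 \<and> b \<bullet> b = 1 \<and> a \<bullet> b = 0"

lemma cpair_eq_iff: "cpair a b = cpair a' b' \<longleftrightarrow> a = a' \<and> b = b'"
  by (auto simp: cpair_def cvec_def vec_eq_iff complex_eq_iff)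

lemma cpair_0 [simp]: "cpair 0 0 = 0"
  by (simp add: cpair_def cvec_def vec_eq_iff)

lemma ex_cpair: "\<exists>a b. x = cpair a b"
  by (intro exI[of _ "\<chi> i. Re (x $ i)"] exI[of _ "\<chi> i. Im (x $ i)"])
    (simp add: cpair_def cvec_def vec_eq_iff complex_eq_iff)

lemma scale_cpair: "c *s cpair a b = cpair (Re c *\<^sub>R a - Im c *\<^sub>R b) (Im c *\<^sub>R a + Re c *\<^sub>R b)"
  by (simp add: cpair_def cvec_def vec_eq_iff complex_eq_iff)

lemma cdot_cpair_self:
  "cdot (cpair a b) (cpair a b) = complex_of_real (a \<bullet> a - b \<bullet> b) + \<i> * complex_of_real (2 * (a \<bullet> b))"
  by (simp add: cpair_def cdot_def sum_3 cvec_def inner_vec_def algebra_simps power2_eq_square)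

lemma cdot_cvec_cpair:
  "cdot (cvec w) (cpair a b) = complex_of_real (w \<bullet> a) + \<i> * complex_of_real (w \<bullet> b)"
  by (simp add: cpair_def cdot_def sum_3 cvec_def inner_vec_def algebra_simps)

lemma isotropic_eq_scaled_cpair:
  assumes "cdot x x = 0" "x \<noteq> 0"
  obtains \<rho> e1 e2 where "\<rho> > 0" "orthonormal_pair e1 e2" "x = complex_of_real \<rho> *s cpair e1 e2"
proof -
  obtain a b where x: "x = cpair a b" using ex_cpair by blast
  have ab: "a \<bullet> a = b \<bullet> b" "a \<bullet> b = 0"
    using assms(1) by (simp_all add: x cdot_cpair_self complex_eq_iff)
  have "a \<noteq> 0"
  proof
    assume "a = 0"
    then have "b = 0" using ab(1) by simp
    with \<open>a = 0\<close> show False using assms(2) by (simp add: x)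
  qed
  define \<rho> where "\<rho> = norm a"
  have \<rho>: "\<rho> > 0" "\<rho> * \<rho> = a \<bullet> a"
    using \<open>a \<noteq> 0\<close> by (simp_all add: \<rho>_def dot_square_norm power2_eq_square)
  have bb: "b \<bullet> b = \<rho> * \<rho>" using \<rho>(2) ab(1) by simp
  show thesis
  proof
    show "\<rho> > 0" by (fact \<rho>(1))
    show "orthonormal_pair ((1/\<rho>) *\<^sub>R a) ((1/\<rho>) *\<^sub>R b)"
      using \<rho> ab(2) bb \<open>a \<noteq> 0\<close> by (simp add: orthonormal_pair_def)
    show "x = complex_of_real \<rho> *s cpair ((1/\<rho>) *\<^sub>R a) ((1/\<rho>) *\<^sub>R b)"
      using \<rho>(1) by (simp add: x scale_cpair)
  qed
qed

lemma cross3_cross3_left: "cross3 (cross3 x y) z = (x \<bullet> z) *\<^sub>R y - (y \<bullet> z) *\<^sub>R x"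
  by (simp add: cross3_simps forall_3)

lemma cross3_cross3_right: "cross3 x (cross3 y z) = (x \<bullet> z) *\<^sub>R y - (x \<bullet> y) *\<^sub>R z"
  by (simp add: cross3_simps forall_3)

lemma orthonormal_pair_cross3:
  assumes "orthonormal_pair e1 e2"
  shows "cross3 e1 e2 \<bullet> cross3 e1 e2 = 1" "e1 \<bullet> cross3 e1 e2 = 0" "e2 \<bullet> cross3 e1 e2 = 0"
    "cross3 (cross3 e1 e2) e1 = e2" "cross3 (cross3 e1 e2) e2 = - e1"
proof -
  show "cross3 e1 e2 \<bullet> cross3 e1 e2 = 1"
    using norm_cross_dot[of e1 e2] assms
    by (simp add: orthonormal_pair_def power2_norm_eq_inner[symmetric] norm_eq_1[symmetric] power_mult_distrib)
  show "e1 \<bullet> cross3 e1 e2 = 0" "e2 \<bullet> cross3 e1 e2 = 0"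
    by (simp_all add: dot_cross_self)
  show "cross3 (cross3 e1 e2) e1 = e2" "cross3 (cross3 e1 e2) e2 = - e1"
    using assms by (simp_all add: cross3_cross3_left orthonormal_pair_def inner_commute)
qed

lemma orthonormal_pair_SO3:
  assumes "orthonormal_pair e1 e2"
  shows "transpose (vector [e1, e2, cross3 e1 e2] :: real^3^3) \<in> SO3"
proof -
  let ?A = "vector [e1, e2, cross3 e1 e2] :: real^3^3"
  note e3 = orthonormal_pair_cross3[OF assms]
  have "?A ** transpose ?A = mat 1"
    using assms e3(1-3)
    by (simp add: orthonormal_pair_def vec_eq_iff forall_3 matrix_matrix_mult_def transpose_def mat_def
        inner_vec_def mult.commute)
  moreover have "det ?A = (e1 \<bullet> e1) * (e2 \<bullet> e2) - (e1 \<bullet> e2)^2"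
    by (simp add: dot_cross_det[symmetric] cross3_simps power2_eq_square)
  ultimately show ?thesis
    using assms by (simp add: SO3_def orthogonal_matrix orthonormal_pair_def)
qed

lemma cmat_frame_matrix_vector_mult:
  "cmat (transpose (vector [u1, u2, u3] :: real^3^3)) *v vector [c1, c2, c3] =
     c1 *s cvec u1 + c2 *s cvec u2 + c3 *s cvec u3"
  by (simp add: vec_eq_iff matrix_vector_mult_def sum_3 cmat_def transpose_def cvec_def)

lemma orthonormal_pair_expand:
  assumes "orthonormal_pair e1 e2"
  shows "w = (w \<bullet> e1) *\<^sub>R e1 + (w \<bullet> e2) *\<^sub>R e2 + (w \<bullet> cross3 e1 e2) *\<^sub>R cross3 e1 e2"
proof -
  define Q where "Q = transpose (vector [e1, e2, cross3 e1 e2] :: real^3^3)"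
  have "Q ** transpose Q = mat 1"
    using orthonormal_pair_SO3[OF assms] by (simp add: Q_def SO3_def orthogonal_matrix_def)
  then have "w = Q *v (transpose Q *v w)"
    by (simp only: matrix_vector_mul_assoc matrix_vector_mul_lid)
  also have "\<dots> = (w \<bullet> e1) *\<^sub>R e1 + (w \<bullet> e2) *\<^sub>R e2 + (w \<bullet> cross3 e1 e2) *\<^sub>R cross3 e1 e2"
    by (simp add: Q_def vec_eq_iff matrix_vector_mult_def sum_3 transpose_def inner_vec_def mult.commute)
  finally show ?thesis .
qed

text \<open>Two positively oriented orthonormal frames with the same third vector differ by a rotation
  in the plane they span, which acts on \<open>e\<^sub>1 + i e\<^sub>2\<close> as multiplication by a unit complex number.\<close>
lemma cpair_eq_scale_if_same_cross3:
  assumes "orthonormal_pair a b" "orthonormal_pair e1 e2" "cross3 a b = cross3 e1 e2"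
  obtains k where "k \<noteq> 0" "cpair a b = k *s cpair e1 e2"
proof
  define \<alpha> where "\<alpha> = a \<bullet> e1"
  define \<beta> where "\<beta> = a \<bullet> e2"
  note e3 = orthonormal_pair_cross3[OF assms(2)]
  have "a \<bullet> cross3 e1 e2 = 0" using orthonormal_pair_cross3(2)[OF assms(1)] assms(3) by simp
  then have a: "a = \<alpha> *\<^sub>R e1 + \<beta> *\<^sub>R e2"
    using orthonormal_pair_expand[OF assms(2), of a] by (simp add: \<alpha>_def \<beta>_def)
  have "b = cross3 (cross3 a b) a"
    using orthonormal_pair_cross3(4)[OF assms(1)] by simp
  also have "\<dots> = \<alpha> *\<^sub>R e2 - \<beta> *\<^sub>R e1"
    unfolding assms(3) by (subst a) (simp add: cross_add_right cross_mult_right e3(4,5))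
  finally have b: "b = \<alpha> *\<^sub>R e2 - \<beta> *\<^sub>R e1" .
  show "cpair a b = Complex \<alpha> (- \<beta>) *s cpair e1 e2"
    by (simp add: a b scale_cpair algebra_simps)
  show "Complex \<alpha> (- \<beta>) \<noteq> 0"
    using a assms(1) by (auto simp: orthonormal_pair_def complex_eq_iff)
qed

lemma cross3_rotate:
  "cross3 (\<alpha> *\<^sub>R a - \<beta> *\<^sub>R b) (\<beta> *\<^sub>R a + \<alpha> *\<^sub>R b) = (\<alpha>^2 + \<beta>^2) *\<^sub>R cross3 a b"
  by (simp add: cross3_simps forall_3 power2_eq_square)

lemma cross3_eq_if_cpair_eq_scale:
  assumes "orthonormal_pair a1 b1" "orthonormal_pair a2 b2" "cpair a1 b1 = c *s cpair a2 b2"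
  shows "cross3 a1 b1 = cross3 a2 b2"
proof -
  have "a1 = Re c *\<^sub>R a2 - Im c *\<^sub>R b2" "b1 = Im c *\<^sub>R a2 + Re c *\<^sub>R b2"
    using assms(3) by (simp_all add: scale_cpair cpair_eq_iff)
  then have c: "cross3 a1 b1 = ((Re c)^2 + (Im c)^2) *\<^sub>R cross3 a2 b2"
    by (simp only: cross3_rotate)
  then have "cross3 a1 b1 \<bullet> cross3 a1 b1 = ((Re c)^2 + (Im c)^2)^2 * (cross3 a2 b2 \<bullet> cross3 a2 b2)"
    by (simp add: power2_eq_square)
  then have "((Re c)^2 + (Im c)^2)^2 = 1"
    using orthonormal_pair_cross3(1)[OF assms(1)] orthonormal_pair_cross3(1)[OF assms(2)] by simp
  moreover have "0 \<le> (Re c)^2 + (Im c)^2" by simp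
  ultimately have "(Re c)^2 + (Im c)^2 = 1"
    by (auto simp: power2_eq_1_iff)
  with c show ?thesis by simp
qed

lemma left_boundary_pt_Xcone:
  assumes "cdot x x = 0" "x \<noteq> 0"
  shows "((0, 0, x, 0, r) :: pt) \<in> Xcone"
proof -
  obtain \<rho> e1 e2 where \<rho>: "\<rho> > 0" and e: "orthonormal_pair e1 e2"
    and x: "x = complex_of_real \<rho> *s cpair e1 e2"
    using isotropic_eq_scaled_cpair[OF assms] .
  define Q where "Q = transpose (vector [e1, e2, cross3 e1 e2] :: real^3^3)"
  define r' where "r' = 2 * r / complex_of_real \<rho>"
  have "cmat Q *v vector [2, 2 * \<i>, 0] = complex_of_real (2 / \<rho>) *s x"
    unfolding Q_def cmat_frame_matrix_vector_mult
    using \<rho> by (simp add: x cpair_def vec_eq_iff)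
  then have rot: "rot_pt Q (0, 0, vector [2, 2 * \<i>, 0], 0, r') = (0, 0, complex_of_real (2 / \<rho>) *s x, 0, r')"
    unfolding pt_eq_iff rot_pt_coords by (simp add: ph_def pM_def px_def py_def pr_def)
  have "rot_pt Q (0, 0, vector [2, 2 * \<i>, 0], 0, r') \<in> Xcone"
    using \<rho> assms(2)
    by (intro Xcone_rot_pt standard_boundary_pt_Xcone orthonormal_pair_SO3[OF e, folded Q_def])
      (simp add: rot pzero_def px_def vec_eq_iff)
  then have "pscale (complex_of_real (\<rho> / 2)) (0, 0, complex_of_real (2 / \<rho>) *s x, 0, r') \<in> Xcone"
    using \<rho> by (intro Xcone_pscale) (simp_all add: rot)
  moreover have "pscale (complex_of_real (\<rho> / 2)) (0, 0, complex_of_real (2 / \<rho>) *s x, 0, r') = (0, 0, x, 0, r)"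
    using \<rho> unfolding pt_eq_iff pscale_coords
    by (simp add: ph_def pM_def px_def py_def pr_def r'_def vec_eq_iff)
  ultimately show ?thesis by simp
qed

subsection \<open>Oriented lines\<close>

lemma ex_unit_perp: "\<exists>a::real^3. a \<bullet> a = 1 \<and> a \<bullet> d = 0"
proof (cases "d $ 1 = 0 \<and> d $ 2 = 0")
  case True
  then show ?thesis
    by (intro exI[of _ "vector [1, 0, 0]"]) (simp add: inner_vec_def sum_3)
next
  case False
  define n where "n = sqrt ((d$1)^2 + (d$2)^2)"
  have "(d$1)^2 + (d$2)^2 > 0" using False by (auto simp: add_pos_nonneg add_nonneg_pos)
  then have n: "n > 0" "n^2 = (d$1)^2 + (d$2)^2" by (simp_all add: n_def)
  define a where "a = (vector [- d$2 / n, d$1 / n, 0] :: real^3)"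
  have "a \<bullet> a = ((d$1)^2 + (d$2)^2) / n^2"
    by (simp add: a_def inner_vec_def sum_3 power_divide add_divide_distrib power2_eq_square)
  then have "a \<bullet> a = 1" using n False by simp
  moreover have "a \<bullet> d = 0" by (simp add: a_def inner_vec_def sum_3 algebra_simps)
  ultimately show ?thesis by blast
qed

definition unit_perp :: "real^3 \<Rightarrow> real^3" where
  "unit_perp d = (SOME a. a \<bullet> a = 1 \<and> a \<bullet> d = 0)"

lemma unit_perp_frame:
  assumes "norm d = 1"
  shows "orthonormal_pair (unit_perp d) (cross3 d (unit_perp d))"
    "cross3 (unit_perp d) (cross3 d (unit_perp d)) = d"
proof -
  let ?a = "unit_perp d"
  have a: "?a \<bullet> ?a = 1" "?a \<bullet> d = 0"
    using someI_ex[OF ex_unit_perp[of d]] by (simp_all add: unit_perp_def)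
  have "(norm (cross3 d ?a))^2 + (d \<bullet> ?a)^2 = (norm d * norm ?a)^2" by (rule norm_cross_dot)
  moreover have "norm ?a = 1" using a(1) by (simp add: norm_eq_1)
  ultimately have "cross3 d ?a \<bullet> cross3 d ?a = 1"
    using assms a by (simp add: power2_norm_eq_inner inner_commute)
  then show "orthonormal_pair ?a (cross3 d ?a)"
    using a by (simp add: orthonormal_pair_def dot_cross_self)
  show "cross3 ?a (cross3 d ?a) = d"
    using a by (simp add: cross3_cross3_right)
qed

text \<open>An isotropic vector whose real and imaginary parts complete \<open>d\<close> to a positively oriented
  orthonormal frame; it is unique up to a complex factor.\<close>
definition iso_dir :: "real^3 \<Rightarrow> complex^3" where
  "iso_dir d = cpair (unit_perp d) (cross3 d (unit_perp d))"

definition line_base :: "(real^3) set \<Rightarrow> real^3 \<Rightarrow> real^3" where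
  "line_base L d = (SOME q. L = {q + t *\<^sub>R d | t. True})"

definition line_const :: "(real^3) set \<Rightarrow> real^3 \<Rightarrow> complex" where
  "line_const L d = 2 * cdot (cvec (line_base L d)) (iso_dir d)"

lemma iso_dir_isotropic: "norm d = 1 \<Longrightarrow> cdot (iso_dir d) (iso_dir d) = 0"
  using unit_perp_frame(1) by (simp add: iso_dir_def cdot_cpair_self orthonormal_pair_def)

lemma iso_dir_nonzero: "norm d = 1 \<Longrightarrow> iso_dir d \<noteq> 0"
  using unit_perp_frame(1) cpair_eq_iff[of _ _ 0 0]
  by (fastforce simp: iso_dir_def orthonormal_pair_def)

lemma oriented_line_eq:
  assumes "(L, d) \<in> oriented_lines"
  shows "L = {line_base L d + t *\<^sub>R d | t. True}"
  using assms someI_ex[of "\<lambda>q. L = {q + t *\<^sub>R d | t. True}"]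
  by (auto simp: oriented_lines_def line_base_def)

lemma mem_oriented_line_iff:
  assumes "(L, d) \<in> oriented_lines"
  shows "p \<in> L \<longleftrightarrow> 2 * cdot (cvec p) (iso_dir d) = line_const L d"
proof -
  have d: "norm d = 1" using assms by (simp add: oriented_lines_def)
  define q where "q = line_base L d"
  define a where "a = unit_perp d"
  define b where "b = cross3 d a"
  have ab: "orthonormal_pair a b" "cross3 a b = d"
    using unit_perp_frame[OF d] by (simp_all add: a_def b_def)
  have "2 * cdot (cvec p) (iso_dir d) - line_const L d
        = 2 * (complex_of_real ((p - q) \<bullet> a) + \<i> * complex_of_real ((p - q) \<bullet> b))"
    by (simp add: line_const_def iso_dir_def q_def a_def b_def cdot_cvec_cpair inner_diff_left
        algebra_simps)
  then have "2 * cdot (cvec p) (iso_dir d) = line_const L d \<longleftrightarrow>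
      2 * (complex_of_real ((p - q) \<bullet> a) + \<i> * complex_of_real ((p - q) \<bullet> b)) = 0"
    by (metis eq_iff_diff_eq_0)
  also have "\<dots> \<longleftrightarrow> (p - q) \<bullet> a = 0 \<and> (p - q) \<bullet> b = 0"
    by (simp add: complex_eq_iff)
  also have "\<dots> \<longleftrightarrow> (\<exists>t. p = q + t *\<^sub>R d)"
  proof
    assume "(p - q) \<bullet> a = 0 \<and> (p - q) \<bullet> b = 0"
    then have "p - q = ((p - q) \<bullet> d) *\<^sub>R d"
      using orthonormal_pair_expand[OF ab(1), of "p - q"] ab(2) by simp
    then have "p = q + ((p - q) \<bullet> d) *\<^sub>R d" by (simp add: algebra_simps)
    then show "\<exists>t. p = q + t *\<^sub>R d" ..
  next
    assume "\<exists>t. p = q + t *\<^sub>R d"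
    moreover have "d \<bullet> a = 0" "d \<bullet> b = 0"
      using orthonormal_pair_cross3(2,3)[OF ab(1)] ab(2) by (simp_all add: inner_commute)
    ultimately show "(p - q) \<bullet> a = 0 \<and> (p - q) \<bullet> b = 0" by auto
  qed
  also have "\<dots> \<longleftrightarrow> p \<in> L"
    using oriented_line_eq[OF assms] by (auto simp: q_def)
  finally show ?thesis ..
qed

lemma oriented_line_eqI:
  assumes l1: "(L1, d1) \<in> oriented_lines" and l2: "(L2, d2) \<in> oriented_lines" and "c \<noteq> 0"
    and iso: "iso_dir d1 = c *s iso_dir d2" and const: "line_const L1 d1 = c * line_const L2 d2"
  shows "(L1, d1) = (L2, d2)"
proof -
  have "p \<in> L1 \<longleftrightarrow> p \<in> L2" for p
    using mem_oriented_line_iff[OF l1, of p] mem_oriented_line_iff[OF l2, of p] \<open>c \<noteq> 0\<close>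
    by (simp add: iso const cdot_scale_right algebra_simps)
  moreover have "norm d1 = 1" "norm d2 = 1" using l1 l2 by (simp_all add: oriented_lines_def)
  then have "d1 = d2"
    using cross3_eq_if_cpair_eq_scale[OF unit_perp_frame(1) unit_perp_frame(1)]
      unit_perp_frame(2)[of d1] unit_perp_frame(2)[of d2] iso
    by (metis iso_dir_def)
  ultimately show ?thesis by auto
qed

lemma ex_oriented_line:
  assumes "cdot x x = 0" "x \<noteq> 0"
  obtains L d k where "(L, d) \<in> oriented_lines" "k \<noteq> 0" "iso_dir d = k *s x" "line_const L d = k * r"
proof -
  obtain \<rho> e1 e2 where \<rho>: "\<rho> > 0" and e: "orthonormal_pair e1 e2"
    and x: "x = complex_of_real \<rho> *s cpair e1 e2"
    using isotropic_eq_scaled_cpair[OF assms] .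
  define d where "d = cross3 e1 e2"
  have d: "norm d = 1"
    using orthonormal_pair_cross3(1)[OF e] by (simp add: d_def norm_eq_1)
  obtain k where k: "k \<noteq> 0" "iso_dir d = k *s cpair e1 e2"
    using cpair_eq_scale_if_same_cross3[OF unit_perp_frame(1)[OF d] e] unit_perp_frame(2)[OF d]
    unfolding iso_dir_def d_def by metis
  have iso: "iso_dir d = (k / complex_of_real \<rho>) *s x"
    using \<rho> by (simp add: k(2) x)
  define q where "q = (Re r / (2 * \<rho>)) *\<^sub>R e1 + (Im r / (2 * \<rho>)) *\<^sub>R e2"
  define L where "L = {q + t *\<^sub>R d | t. True}"
  have line: "(L, d) \<in> oriented_lines"
    using d by (auto simp: oriented_lines_def L_def)
  have "q \<bullet> e1 = Re r / (2 * \<rho>)" "q \<bullet> e2 = Im r / (2 * \<rho>)"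
    using e by (simp_all add: q_def orthonormal_pair_def inner_add_left inner_commute[of e2 e1])
  then have "2 * cdot (cvec q) x = r"
    using \<rho> by (simp add: x cdot_scale_right cdot_cvec_cpair complex_eq_iff)
  moreover have "q \<in> L" by (auto simp: L_def intro: exI[of _ 0])
  then have "line_const L d = 2 * cdot (cvec q) (iso_dir d)"
    using mem_oriented_line_iff[OF line] by simp
  ultimately have "line_const L d = (k / complex_of_real \<rho>) * r"
    by (simp add: iso cdot_scale_right)
  moreover have "k / complex_of_real \<rho> \<noteq> 0" using k(1) \<rho> by simp
  ultimately show thesis using that line iso by blast
qed

subsection \<open>Collinearity points\<close>

definition left_pt :: "(real^3) set \<times> (real^3) \<Rightarrow> pt" where
  "left_pt l = (0, 0, iso_dir (snd l), 0, line_const (fst l) (snd l))"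

lemma left_pt_coords:
  "ph (left_pt l) = 0" "pM (left_pt l) = 0" "px (left_pt l) = iso_dir (snd l)" "py (left_pt l) = 0"
  "pr (left_pt l) = line_const (fst l) (snd l)"
  by (simp_all add: left_pt_def ph_def pM_def px_def py_def pr_def)

lemma psc_left_pt:
  assumes "l \<in> oriented_lines"
  shows "psc (pclass (left_pt l)) p P \<longleftrightarrow> p \<in> fst l"
proof -
  have "(0::complex^3^3) *v u = 0" for u by (simp add: matrix_vector_mult_def vec_eq_iff)
  then have "psc (pclass (left_pt l)) p P \<longleftrightarrow>
      line_const (fst l) (snd l) - 2 * cdot (cvec p) (iso_dir (snd l)) = 0"
    by (simp add: psc_pclass psc_vec_def left_pt_coords)
  also have "\<dots> \<longleftrightarrow> p \<in> fst l"
    using mem_oriented_line_iff[of "fst l" "snd l" p] assms by auto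
  finally show ?thesis .
qed

lemma bij_betw_left_pt: "bij_betw (\<lambda>l. pclass (left_pt l)) oriented_lines left_coll"
  unfolding bij_betw_def
proof (intro conjI inj_onI set_eqI iffI)
  fix l1 l2 assume l: "l1 \<in> oriented_lines" "l2 \<in> oriented_lines"
    and eq: "pclass (left_pt l1) = pclass (left_pt l2)"
  obtain c where c: "c \<noteq> 0" "left_pt l1 = pscale c (left_pt l2)"
    using pclass_eq_imp_pscale[OF eq] by blast
  then have "iso_dir (snd l1) = c *s iso_dir (snd l2)"
    "line_const (fst l1) (snd l1) = c * line_const (fst l2) (snd l2)"
    by (metis left_pt_coords(3) pscale_coords(3), metis left_pt_coords(5) pscale_coords(5))
  with c(1) l show "l1 = l2"
    using oriented_line_eqI[of "fst l1" "snd l1" "fst l2" "snd l2" c] by simp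
next
  fix \<beta> assume "\<beta> \<in> (\<lambda>l. pclass (left_pt l)) ` oriented_lines"
  then obtain l where l: "l \<in> oriented_lines" "\<beta> = pclass (left_pt l)" by blast
  then have "norm (snd l) = 1" by (auto simp: oriented_lines_def)
  then have iso: "cdot (iso_dir (snd l)) (iso_dir (snd l)) = 0" "iso_dir (snd l) \<noteq> 0"
    by (simp_all add: iso_dir_isotropic iso_dir_nonzero)
  then have "left_pt l \<in> Xcone" "px (left_pt l) \<noteq> 0"
    unfolding left_pt_def by (rule left_boundary_pt_Xcone) (simp add: iso(2) px_def)
  then show "\<beta> \<in> left_coll"
    unfolding left_coll_def l(2) using left_pt_coords by blast
next
  fix \<beta> assume "\<beta> \<in> left_coll"
  then obtain v where v: "\<beta> = pclass v" "v \<in> Xcone" "ph v = 0" "pM v = 0" "px v \<noteq> 0" "py v = 0"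
    unfolding left_coll_def by blast
  have "cdot (px v) (px v) = 0" using Xcone_cdot_px[OF v(2)] v(3) by simp
  then obtain L d k where Ld: "(L, d) \<in> oriented_lines" "k \<noteq> 0"
    "iso_dir d = k *s px v" "line_const L d = k * pr v"
    using ex_oriented_line v(5) by metis
  then have "left_pt (L, d) = pscale k v"
    using v unfolding pt_eq_iff pscale_coords left_pt_coords by (simp add: vec_eq_iff)
  then have "pclass (left_pt (L, d)) = \<beta>" using v(1) pclass_pscale[OF Ld(2)] by simp
  then show "\<beta> \<in> (\<lambda>l. pclass (left_pt l)) ` oriented_lines" using Ld(1) by blast
qed

lemma pclass_swap_pt: "pclass (swap_pt v) = swap_pt ` pclass v"
  unfolding pclass_def swap_pt_pscale[symmetric] by blast

lemma psc_image_swap_pt: "psc (swap_pt ` \<beta>) p P \<longleftrightarrow> psc \<beta> P p"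
  by (simp add: psc_def psc_vec_swap_pt)

lemma image_swap_pt_right_coll:
  assumes "\<beta> \<in> right_coll"
  shows "swap_pt ` \<beta> \<in> left_coll"
proof -
  obtain v where v: "\<beta> = pclass v" "v \<in> Xcone" "ph v = 0" "pM v = 0" "px v = 0" "py v \<noteq> 0"
    using assms unfolding right_coll_def by blast
  then have "swap_pt ` \<beta> = pclass (swap_pt v)" "swap_pt v \<in> Xcone"
    by (simp_all add: pclass_swap_pt Xcone_swap_pt)
  then show ?thesis
    using v(3-6) unfolding left_coll_def
    by (intro CollectI exI[of _ "swap_pt v"]) (simp add: swap_pt_coords transpose_eq_0_iff)
qed

lemma image_swap_pt_left_coll:
  assumes "\<beta> \<in> left_coll"
  shows "swap_pt ` \<beta> \<in> right_coll"
proof -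
  obtain v where v: "\<beta> = pclass v" "v \<in> Xcone" "ph v = 0" "pM v = 0" "px v \<noteq> 0" "py v = 0"
    using assms unfolding left_coll_def by blast
  then have "swap_pt ` \<beta> = pclass (swap_pt v)" "swap_pt v \<in> Xcone"
    by (simp_all add: pclass_swap_pt Xcone_swap_pt)
  then show ?thesis
    using v(3-6) unfolding right_coll_def
    by (intro CollectI exI[of _ "swap_pt v"]) (simp add: swap_pt_coords transpose_eq_0_iff)
qed

lemma image_swap_pt_image_swap_pt [simp]: "swap_pt ` swap_pt ` \<beta> = \<beta>"
  by (simp add: image_comp)

lemma bij_betw_image_swap_pt: "bij_betw ((`) swap_pt) right_coll left_coll"
  by (rule bij_betw_byWitness[where f' = "(`) swap_pt"])
    (auto intro: image_swap_pt_right_coll image_swap_pt_left_coll)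

lemma bij_betw_inverse_transfer:
  assumes "bij_betw G A B" "\<And>a. a \<in> A \<Longrightarrow> Q (G a) a"
  shows "\<exists>g. bij_betw g B A \<and> (\<forall>b\<in>B. Q b (g b))"
proof (intro exI conjI ballI)
  show "bij_betw (inv_into A G) B A" by (rule bij_betw_inv_into[OF assms(1)])
  fix b assume "b \<in> B"
  then have "b \<in> G ` A" using assms(1) by (simp add: bij_betw_def)
  then show "Q b (inv_into A G b)"
    using assms(2)[OF inv_into_into] f_inv_into_f by metis
qed

theorem mainTheorem6:
  shows "(\<exists>g. bij_betw g left_coll oriented_lines \<and>
            (\<forall>\<beta>\<in>left_coll. \<forall>p P. psc \<beta> p P \<longleftrightarrow> p \<in> fst (g \<beta>)))
       \<and> (\<exists>g. bij_betw g right_coll oriented_lines \<and>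
            (\<forall>\<beta>\<in>right_coll. \<forall>p P. psc \<beta> p P \<longleftrightarrow> P \<in> fst (g \<beta>)))"
proof -
  obtain g where g: "bij_betw g left_coll oriented_lines"
    and psc_g: "\<forall>\<beta>\<in>left_coll. \<forall>p P. psc \<beta> p P \<longleftrightarrow> p \<in> fst (g \<beta>)"
    using bij_betw_inverse_transfer[OF bij_betw_left_pt, of "\<lambda>\<beta> l. \<forall>p P. psc \<beta> p P \<longleftrightarrow> p \<in> fst l"]
      psc_left_pt by blast
  have "bij_betw (g \<circ> (`) swap_pt) right_coll oriented_lines"
    using bij_betw_image_swap_pt g by (rule bij_betw_trans)
  moreover have "psc \<beta> p P \<longleftrightarrow> P \<in> fst ((g \<circ> (`) swap_pt) \<beta>)" if "\<beta> \<in> right_coll" for \<beta> p P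
  proof -
    have "swap_pt ` \<beta> \<in> left_coll" using that by (rule image_swap_pt_right_coll)
    then show ?thesis
      using psc_g psc_image_swap_pt[of "swap_pt ` \<beta>" p P] by simp
  qed
  ultimately show ?thesis using g psc_g by blast
qed

end
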